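(* Consider the two-player non-cooperative pricing game $\langle \mathcal{R}, (P_i)_{i\in\mathcal{R}}, (U_i)_{i\in\mathcal{R}}\rangle$ between two multi-homing mobile devices (MMD relays) $\mathcal{R}=\{r_1,r_2\}$, in which the strategy of player $r_i$ is its charging price $p_{r_i}\in[0,+\infty)$ and, with the offered bandwidths $\omega_1,\omega_2>0$ held fixed, the utility of player $r_i$ ($i\in\{1,2\}$, $j\neq i$) is $$U_i(p_{r_i},p_{r_j}) \;=\; p_{r_i}\cdot \frac{n}{1+2^{\,p_{r_i}-p_{r_j}}\,\dfrac{\omega_j Y_j}{\omega_i Y_i}} \;-\; c_i\,\omega_i .$$ Then this game has a pure-strategy Nash equilibrium.
   Context: Here $n>0$ is the total number of ordinary mobile devices (OMDs) in the system, and the expression $n/(1+2^{p_{r_i}-p_{r_j}}\omega_jY_j/(\omega_iY_i))$ is the number of OMDs attached to $r_i$ at the evolutionary equilibrium of the OMDs' relay-selection game. $c_i\ge 0$ is the relay cost of $r_i$ per unit bandwidth. $Y_i=\max\{\tau_i,b_i\}>0$ is a channel-quality constant, where $b_i=1+SNR_{s_i d_i}$, $\tau_i=1+SNR_{s_i d_i}+SNR_{s_i r_i d_i}$, with $SNR_{s_i d_i}=P|h_{s_id_i}|^2/\sigma^2$ and $SNR_{s_ir_id_i}=\frac{P^2|h_{s_ir_i}|^2|h_{r_id_i}|^2}{\sigma^2(\sigma^2+P|h_{s_ir_i}|^2+P|h_{r_id_i}|^2)}$ (transmit power $P>0$, noise variance $\sigma^2>0$, channel gains $h$ between source $s_i$,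 relay $r_i$, destination $d_i$). A pure Nash equilibrium is a pair $(p_{r_1}^*,p_{r_2}^* )$ such that for each $i$, $U_i(p_{r_i}^*,p_{r_j}^* )\ge U_i(p_{r_i},p_{r_j}^* )$ for all $p_{r_i}\ge 0$. *)

theory Defs
  imports Complex_Main
begin

definition snr_direct :: "real \<Rightarrow> real \<Rightarrow> complex \<Rightarrow> real" where
  "snr_direct P \<sigma>2 hsd = P * (cmod hsd)^2 / \<sigma>2"

definition snr_relay :: "real \<Rightarrow> real \<Rightarrow> complex \<Rightarrow> complex \<Rightarrow> real" where
  "snr_relay P \<sigma>2 hsr hrd =
     P^2 * (cmod hsr)^2 * (cmod hrd)^2 / (\<sigma>2 * (\<sigma>2 + P * (cmod hsr)^2 + P * (cmod hrd)^2))"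

definition chanY :: "real \<Rightarrow> real \<Rightarrow> complex \<Rightarrow> complex \<Rightarrow> complex \<Rightarrow> real" where
  "chanY P \<sigma>2 hsd hsr hrd =
     max (1 + snr_direct P \<sigma>2 hsd + snr_relay P \<sigma>2 hsr hrd) (1 + snr_direct P \<sigma>2 hsd)"

definition util :: "real \<Rightarrow> real \<Rightarrow> real \<Rightarrow> real \<Rightarrow> real \<Rightarrow> real \<Rightarrow> real \<Rightarrow> real \<Rightarrow> real" where
  "util n ci wi wj Yi Yj p_i p_j =
     p_i * (n / (1 + 2 powr (p_i - p_j) * ((wj * Yj) / (wi * Yi)))) - ci * wi"

end

theory Submission
  imports Defs
begin

text \<open>Each relay's revenue is a logit-type function of its own price. Its first-order
  condition singles out a global maximiser, because the tangent-line bound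
  \<open>exp x \<ge> 1 + x\<close> turns the condition into an upper bound for the revenue at every other
  price. Writing \<open>K\<close> for the ratio of the weighted channel qualities, the two first-order
  conditions are solved simultaneously by \<open>p\<^sub>1 ln 2 = 1 + 1/t\<close>, \<open>p\<^sub>2 ln 2 = 1 + t\<close>,
  where \<open>t > 0\<close> solves \<open>t exp (t - 1/t) = K\<close>; such a \<open>t\<close> exists by the intermediate value
  theorem.\<close>

lemma logit_revenue_le_first_order_point:
  fixes a K n p r q :: real
  assumes a: "1 < a" and K: "K > 0" and n: "n \<ge> 0"
    and foc: "a powr (p - r) * K * (p * ln a - 1) = 1"
  shows "q * (n / (1 + a powr (q - r) * K)) \<le> p * (n / (1 + a powr (p - r) * K))"
proof -
  define L where "L = ln a"
  define B where "B = a powr (p - r) * K"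
  define C where "C = a powr (q - r) * K"
  have L: "L > 0" and B: "B > 0" and C: "C > 0"
    using a K by (simp_all add: L_def B_def C_def)
  have fo: "B * (p * L - 1) = 1"
    using foc by (simp add: B_def L_def)
  then have margin: "p * L - 1 > 0"
    using B by (metis zero_less_mult_pos zero_less_one)
  have "C = B * exp (L * (q - p))"
    using a by (simp add: C_def B_def L_def powr_def exp_add[symmetric] algebra_simps)
  also have "\<dots> \<ge> B * (1 + L * (q - p))"
    using B exp_ge_add_one_self[of "L * (q - p)"] by simp
  finally have "(p * L - 1) * C \<ge> (p * L - 1) * B * (1 + L * (q - p))"
    using margin by (simp add: mult_left_mono mult.assoc)
  then have "(p * L - 1) * C \<ge> 1 + L * (q - p)"
    using fo by (simp add: mult.commute)
  then have "q / (1 + C) \<le> (p * L - 1) / L"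
    using L C by (simp add: field_simps)
  moreover have "p / (1 + B) = (p * L - 1) / L"
    using fo L B by (simp add: field_simps)
  ultimately have "q / (1 + C) \<le> p / (1 + B)"
    by simp
  then have "n * (q / (1 + C)) \<le> n * (p / (1 + B))"
    using n by (rule mult_left_mono)
  then show ?thesis
    by (simp add: B_def C_def mult.commute)
qed

lemma exists_pos_mult_exp_diff_inverse_eq:
  fixes K :: real
  assumes K: "K > 0"
  shows "\<exists>t>0. t * exp (t - 1 / t) = K"
proof -
  define g where "g = (\<lambda>t::real. t * exp (t - 1 / t))"
  define a where "a = min 1 K"
  define b where "b = max 1 K"
  have a: "0 < a" "a \<le> 1" "a \<le> K" and b: "1 \<le> b" "K \<le> b"
    using K by (auto simp: a_def b_def)
  have "a - 1 / a \<le> 0"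
    using a by (simp add: field_simps mult_le_one)
  then have "g a \<le> a"
    using a by (simp add: g_def mult_left_le)
  with a have ga: "g a \<le> K" by simp
  have "b - 1 / b \<ge> 0"
    using b by (simp add: field_simps one_le_power[of b 2, simplified power2_eq_square])
  then have "b \<le> g b"
    using b by (simp add: g_def)
  with b have gb: "K \<le> g b" by simp
  have "\<forall>x. a \<le> x \<and> x \<le> b \<longrightarrow> isCont g x"
    using a by (auto simp: g_def intro!: continuous_intros)
  then obtain t where "a \<le> t" "g t = K"
    using IVT[of g a K b] ga gb a b by fastforce
  with a show ?thesis
    by (intro exI[of _ t]) (auto simp: g_def)
qed

lemma first_order_conditions_solvable:
  fixes a K :: real
  assumes a: "1 < a" and K: "K > 0"
  shows "\<exists>p1 p2. p1 \<ge> 0 \<and> p2 \<ge> 0 \<and>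
    a powr (p1 - p2) * K * (p1 * ln a - 1) = 1 \<and>
    a powr (p2 - p1) * (1 / K) * (p2 * ln a - 1) = 1"
proof -
  define L where "L = ln a"
  have L: "L > 0" using a by (simp add: L_def)
  obtain t where t: "t > 0" and Kt: "K = t * exp (t - 1 / t)"
    using exists_pos_mult_exp_diff_inverse_eq[OF K] by auto
  define p1 where "p1 = (1 + 1 / t) / L"
  define p2 where "p2 = (1 + t) / L"
  have margins: "p1 * L - 1 = 1 / t" "p2 * L - 1 = t"
    using L by (simp_all add: p1_def p2_def)
  have "L * (p2 - p1) = t - 1 / t" "L * (p1 - p2) = - (t - 1 / t)"
    using L by (simp_all add: p1_def p2_def field_simps)
  then have prices: "a powr (p2 - p1) = exp (t - 1 / t)" "a powr (p1 - p2) = exp (- (t - 1 / t))"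
    using a by (simp_all add: powr_def L_def mult.commute)
  have "a powr (p1 - p2) * K * (p1 * ln a - 1) = 1"
    using t margins prices Kt by (simp add: L_def exp_minus field_simps)
  moreover have "a powr (p2 - p1) * (1 / K) * (p2 * ln a - 1) = 1"
    using t margins prices Kt by (simp add: L_def field_simps)
  moreover have "p1 \<ge> 0" "p2 \<ge> 0"
    using t L by (simp_all add: p1_def p2_def)
  ultimately show ?thesis by blast
qed

lemma chanY_pos:
  assumes "P > 0" "\<sigma>2 > 0"
  shows "chanY P \<sigma>2 hsd hsr hrd > 0"
proof -
  have "snr_direct P \<sigma>2 hsd \<ge> 0"
    using assms by (simp add: snr_direct_def)
  then show ?thesis
    by (simp add: chanY_def)
qed

theorem theorem1:
  fixes n P \<sigma>2 :: real
    and c w :: "nat \<Rightarrow> real"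
    and hsd hsr hrd :: "nat \<Rightarrow> complex"
  assumes "n > 0" and "P > 0" and "\<sigma>2 > 0"
    and "c 1 \<ge> 0" and "c 2 \<ge> 0"
    and "w 1 > 0" and "w 2 > 0"
  defines "Y \<equiv> \<lambda>i. chanY P \<sigma>2 (hsd i) (hsr i) (hrd i)"
  shows "\<exists>p1 p2. p1 \<ge> 0 \<and> p2 \<ge> 0 \<and>
     (\<forall>q\<ge>0. util n (c 1) (w 1) (w 2) (Y 1) (Y 2) p1 p2 \<ge> util n (c 1) (w 1) (w 2) (Y 1) (Y 2) q p2) \<and>
     (\<forall>q\<ge>0. util n (c 2) (w 2) (w 1) (Y 2) (Y 1) p2 p1 \<ge> util n (c 2) (w 2) (w 1) (Y 2) (Y 1) q p1)"
proof -
  define K where "K = (w 2 * Y 2) / (w 1 * Y 1)"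
  have K: "K > 0"
    using chanY_pos[OF assms(2,3)] assms(6,7) by (simp add: K_def Y_def)
  have K_inverse: "(w 1 * Y 1) / (w 2 * Y 2) = 1 / K"
    by (simp add: K_def)
  obtain p1 p2 where "p1 \<ge> 0" "p2 \<ge> 0"
    and foc1: "2 powr (p1 - p2) * K * (p1 * ln 2 - 1) = 1"
    and foc2: "2 powr (p2 - p1) * (1 / K) * (p2 * ln 2 - 1) = 1"
    using first_order_conditions_solvable[of 2 K] K by auto
  moreover have "util n (c 1) (w 1) (w 2) (Y 1) (Y 2) q p2 \<le> util n (c 1) (w 1) (w 2) (Y 1) (Y 2) p1 p2"
    for q
    unfolding util_def K_def[symmetric]
    using logit_revenue_le_first_order_point[OF _ K _ foc1, of n q] assms(1) by simp
  moreover have "util n (c 2) (w 2) (w 1) (Y 2) (Y 1) q p1 \<le> util n (c 2) (w 2) (w 1) (Y 2) (Y 1) p2 p1"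
    for q
    unfolding util_def K_inverse
    using logit_revenue_le_first_order_point[OF _ _ _ foc2, of n q] K assms(1) by simp
  ultimately show ?thesis
    by blast
qed

end
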